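(* Let $n\ge 2$ and let $b\ge 0$ be an integer, with $b'=\lfloor b/2\rfloor$. Let $P(b)$ be the number of $n$-tuples $(x_1,\dots,x_n)$ of non-negative integers with $x_1+x_2+\cdots+x_{n-1}+2x_n=b$. Then $$P(b)=\sum_{k=0}^{\lfloor (n-1)/2\rfloor}\binom{n-1}{2k}\, C(b'-k+1;\,n-1)\quad\text{if } b \text{ is even},$$ $$P(b)=\sum_{k=0}^{\lfloor (n-2)/2\rfloor}\binom{n-1}{2k+1}\, C(b'-k+1;\,n-1)\quad\text{if } b \text{ is odd}.$$
   Context: For an integer $m$, $C(m;n-1)=\frac{1}{(n-1)!}\,m(m+1)\cdots(m+n-2)$ if $m>0$, and $C(m;n-1)=0$ otherwise. $\binom{n-1}{j}$ denotes the usual binomial coefficient. *)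

theory Defs
  imports Complex_Main
begin

definition Cc :: "int \<Rightarrow> nat \<Rightarrow> real" where
  "Cc m n = (if m > 0 then (\<Prod>i<n - 1. real_of_int (m + int i)) / fact (n - 1) else 0)"

definition Pcount :: "nat \<Rightarrow> nat \<Rightarrow> nat" where
  "Pcount n b = card {xs :: nat list. length xs = n \<and>
      (\<Sum>i<n - 1. xs ! i) + 2 * xs ! (n - 1) = b}"

end

theory Submission
  imports Defs
begin

text \<open>Split each of x_1, ..., x_(n-1) as 2 y_i + e_i with e_i in {0,1}. The set E of positions
  with e_i = 1 can be chosen freely, and for |E| = j the remaining tuple (y_1, ..., y_(n-1), x_n)
  only has to sum to (b - j)/2, which it does in binom((b - j)/2 + n - 1, n - 1) ways. Hence
  P(b) = sum_j binom(n - 1, j) binom((b - j)/2 + n - 1, n - 1) over the j of the parity of b,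
  and writing j = 2k or j = 2k + 1 gives the two formulas.\<close>

lemma Cc_Suc_eq_binomial:
  "Cc (int c - int k + 1) (Suc m) = real (if k \<le> c then (c - k + m) choose m else 0)"
proof (cases "k \<le> c")
  case True
  have "real ((c - k + m) choose m) = real (c - k + m) gchoose m"
    by (rule binomial_gbinomial)
  also have "\<dots> = pochhammer (real (c - k + m) - real m + 1) m / fact m"
    by (rule gbinomial_pochhammer')
  also have "real (c - k + m) - real m + 1 = real_of_int (int c - int k + 1)"
    using True by simp
  finally show ?thesis
    using True by (simp add: Cc_def pochhammer_prod atLeast0LessThan)
qed (simp add: Cc_def)

lemma sum_Pow_card:
  fixes h :: "nat \<Rightarrow> 'a::comm_semiring_1"
  assumes "finite A"
  shows "(\<Sum>E\<in>Pow A. h (card E)) = (\<Sum>i\<le>card A. of_nat (card A choose i) * h i)"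
proof -
  have "(\<Sum>E\<in>Pow A. h (card E)) = (\<Sum>i\<le>card A. \<Sum>E\<in>{E\<in>Pow A. card E = i}. h (card E))"
    using assms by (intro sum.group[symmetric]) (auto intro: card_mono)
  also have "\<dots> = (\<Sum>i\<le>card A. of_nat (card A choose i) * h i)"
  proof (rule sum.cong[OF refl])
    fix i
    have "(\<Sum>E\<in>{E\<in>Pow A. card E = i}. h (card E)) = (\<Sum>E\<in>{E. E \<subseteq> A \<and> card E = i}. h i)"
      by (rule sum.cong) auto
    then show "(\<Sum>E\<in>{E\<in>Pow A. card E = i}. h (card E)) = of_nat (card A choose i) * h i"
      using n_subsets[OF assms, of i] by simp
  qed
  finally show ?thesis .
qed

lemma sum_atMost_vanishing_off_parity:
  fixes f :: "nat \<Rightarrow> 'a::comm_monoid_add"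
  assumes "r < 2" "r \<le> m" and vanish: "\<And>i. i mod 2 \<noteq> r \<Longrightarrow> f i = 0"
  shows "(\<Sum>i\<le>m. f i) = (\<Sum>k=0..(m - r) div 2. f (2 * k + r))"
proof -
  have image: "(\<lambda>k. 2 * k + r) ` {0..(m - r) div 2} = {i. i \<le> m \<and> i mod 2 = r}"
  proof (intro equalityI subsetI)
    fix i assume "i \<in> {i. i \<le> m \<and> i mod 2 = r}"
    then have "i = 2 * (i div 2) + r" "i div 2 \<in> {0..(m - r) div 2}"
      using assms(1) by (auto, presburger)
    then show "i \<in> (\<lambda>k. 2 * k + r) ` {0..(m - r) div 2}" by blast
  qed (use assms(1,2) in auto)
  have "(\<Sum>i\<le>m. f i) = (\<Sum>i\<in>{i. i \<le> m \<and> i mod 2 = r}. f i)"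
    by (rule sum.mono_neutral_right) (auto intro: vanish)
  also have "\<dots> = (\<Sum>k=0..(m - r) div 2. f (2 * k + r))"
    by (simp flip: image add: sum.reindex inj_on_def)
  finally show ?thesis .
qed

lemma sum_eq_card_odd_plus_twice_halves:
  fixes x :: "'a \<Rightarrow> nat"
  assumes "finite A"
  shows "(\<Sum>i\<in>A. x i) = card {i\<in>A. odd (x i)} + 2 * (\<Sum>i\<in>A. x i div 2)"
proof -
  have "(\<Sum>i\<in>A. x i) = (\<Sum>i\<in>A. of_bool (odd (x i)) + 2 * (x i div 2))"
    by (rule sum.cong) (auto simp: odd_iff_mod_2_eq_one)
  with assms show ?thesis
    by (simp add: sum.distrib sum_distrib_left Int_def)
qed

definition parity_split :: "nat \<Rightarrow> nat list \<Rightarrow> nat set \<times> nat list" where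
  "parity_split m xs =
     ({i. i < m \<and> odd (xs ! i)}, map (\<lambda>i. if i < m then xs ! i div 2 else xs ! i) [0..<Suc m])"

definition parity_join :: "nat \<Rightarrow> nat set \<times> nat list \<Rightarrow> nat list" where
  "parity_join m = (\<lambda>(E, ys). map (\<lambda>i. if i < m then 2 * ys ! i + of_bool (i \<in> E) else ys ! i) [0..<Suc m])"

lemma bij_betw_parity_split:
  "bij_betw (parity_split m) {xs. length xs = Suc m} (Pow {..<m} \<times> {ys. length ys = Suc m})"
proof (rule bij_betw_byWitness[where f' = "parity_join m"])
  show "\<forall>xs\<in>{xs. length xs = Suc m}. parity_join m (parity_split m xs) = xs"
    by (auto intro!: nth_equalityI simp del: upt_Suc
        simp: parity_join_def parity_split_def odd_iff_mod_2_eq_one)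
  show "\<forall>p\<in>Pow {..<m} \<times> {ys. length ys = Suc m}. parity_split m (parity_join m p) = p"
    by (auto intro!: nth_equalityI simp del: upt_Suc simp: parity_join_def parity_split_def)
qed (auto simp del: upt_Suc simp: parity_join_def parity_split_def)

lemma parity_split_weight:
  "(\<Sum>i<m. xs ! i) + 2 * xs ! m = (case parity_split m xs of (E, ys) \<Rightarrow> card E + 2 * sum_list ys)"
proof -
  have "sum_list (map (\<lambda>i. if i < m then xs ! i div 2 else xs ! i) [0..<Suc m])
      = (\<Sum>i<Suc m. if i < m then xs ! i div 2 else xs ! i)"
    by (simp only: interv_sum_list_conv_sum_set_nat set_upt atLeast0LessThan)
  also have "\<dots> = (\<Sum>i<m. xs ! i div 2) + xs ! m"
    by simp
  finally show ?thesis
    using sum_eq_card_odd_plus_twice_halves[of "{..<m}" "(!) xs"]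
    by (simp add: parity_split_def)
qed

lemma card_lists_sum_list_eq:
  "card {ys :: nat list. length ys = Suc m \<and> sum_list ys = N} = (N + m) choose m"
  using card_length_sum_list[of "Suc m" N] binomial_symmetric[of m "N + m"] by simp

lemma card_lists_add_twice_sum_list:
  "card {ys :: nat list. length ys = Suc m \<and> c + 2 * sum_list ys = b}
     = (if c mod 2 = b mod 2 \<and> c div 2 \<le> b div 2 then (b div 2 - c div 2 + m) choose m else 0)"
proof (cases "c mod 2 = b mod 2 \<and> c div 2 \<le> b div 2")
  case True
  then have "c + 2 * s = b \<longleftrightarrow> s = b div 2 - c div 2" for s :: nat
    using div_mult_mod_eq[of b 2] div_mult_mod_eq[of c 2] by linarith
  then have "{ys :: nat list. length ys = Suc m \<and> c + 2 * sum_list ys = b}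
      = {ys. length ys = Suc m \<and> sum_list ys = b div 2 - c div 2}"
    by blast
  with True show ?thesis
    by (simp add: card_lists_sum_list_eq)
next
  case False
  then have "{ys :: nat list. length ys = Suc m \<and> c + 2 * sum_list ys = b} = {}"
    by auto
  with False show ?thesis
    by (simp only: card.empty) simp
qed

lemma finite_lists_add_twice_sum_list:
  "finite {ys :: nat list. length ys = k \<and> c + 2 * sum_list ys = b}"
proof (rule finite_subset)
  show "{ys :: nat list. length ys = k \<and> c + 2 * sum_list ys = b}
      \<subseteq> {ys. set ys \<subseteq> {..b} \<and> length ys = k}"
    by (auto dest!: member_le_sum_list)
qed (simp add: finite_lists_length_eq)

lemma bij_betw_Collect_comp:
  assumes "bij_betw f A B"
  shows "bij_betw f {x\<in>A. P (f x)} {y\<in>B. P y}"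
  using assms by (rule bij_betw_subset) (use bij_betw_imp_surj_on[OF assms] in auto)

lemma Pcount_Suc_eq_sum_binomial:
  "real (Pcount (Suc m) b) = (\<Sum>i\<le>m. real (m choose i) *
     real (card {ys :: nat list. length ys = Suc m \<and> i + 2 * sum_list ys = b}))"
proof -
  define fiber where "fiber i = {ys :: nat list. length ys = Suc m \<and> i + 2 * sum_list ys = b}" for i
  let ?weight = "\<lambda>(E, ys). card E + 2 * sum_list ys"
  have "bij_betw (parity_split m)
      {xs \<in> {xs. length xs = Suc m}. ?weight (parity_split m xs) = b}
      {p \<in> Pow {..<m} \<times> {ys. length ys = Suc m}. ?weight p = b}"
    by (rule bij_betw_Collect_comp[OF bij_betw_parity_split])
  moreover have "{xs \<in> {xs. length xs = Suc m}. ?weight (parity_split m xs) = b}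
      = {xs. length xs = Suc m \<and> (\<Sum>i<Suc m - 1. xs ! i) + 2 * xs ! (Suc m - 1) = b}"
    by (auto simp: parity_split_weight)
  moreover have "{p \<in> Pow {..<m} \<times> {ys. length ys = Suc m}. ?weight p = b}
      = (SIGMA E:Pow {..<m}. fiber (card E))"
    by (auto simp: fiber_def)
  ultimately have "Pcount (Suc m) b = (\<Sum>E\<in>Pow {..<m}. card (fiber (card E)))"
    unfolding Pcount_def
    by (auto dest!: bij_betw_same_card simp: fiber_def finite_lists_add_twice_sum_list)
  then have "real (Pcount (Suc m) b) = (\<Sum>E\<in>Pow {..<m}. real (card (fiber (card E))))"
    by simp
  also have "\<dots> = (\<Sum>i\<le>card {..<m}. real (card {..<m} choose i) * real (card (fiber i)))"
    by (rule sum_Pow_card) simp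
  finally show ?thesis
    by (simp add: fiber_def)
qed

theorem mainTheorem4:
  fixes n b :: nat
  assumes "n \<ge> 2"
  shows "(even b \<longrightarrow> real (Pcount n b) =
            (\<Sum>k = 0..(n - 1) div 2. real ((n - 1) choose (2 * k)) *
               Cc (int (b div 2) - int k + 1) n))
       \<and> (odd b \<longrightarrow> real (Pcount n b) =
            (\<Sum>k = 0..(n - 2) div 2. real ((n - 1) choose (2 * k + 1)) *
               Cc (int (b div 2) - int k + 1) n))"
proof -
  obtain m where n: "n = Suc m" and "1 \<le> m"
    using assms by (cases n) auto
  define r where "r = b mod 2"
  define F where "F i = real (m choose i) *
    real (card {ys :: nat list. length ys = Suc m \<and> i + 2 * sum_list ys = b})" for i
  have "real (Pcount n b) = (\<Sum>i\<le>m. F i)"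
    unfolding n F_def by (rule Pcount_Suc_eq_sum_binomial)
  also have "\<dots> = (\<Sum>k = 0..(m - r) div 2. F (2 * k + r))"
    by (rule sum_atMost_vanishing_off_parity)
      (use \<open>1 \<le> m\<close> in \<open>simp_all add: r_def F_def card_lists_add_twice_sum_list\<close>)
  also have "\<dots> = (\<Sum>k = 0..(m - r) div 2.
      real (m choose (2 * k + r)) * Cc (int (b div 2) - int k + 1) n)"
    by (rule sum.cong) (simp_all add: F_def n r_def card_lists_add_twice_sum_list Cc_Suc_eq_binomial)
  finally have "real (Pcount n b) = (\<Sum>k = 0..(m - r) div 2.
      real (m choose (2 * k + r)) * Cc (int (b div 2) - int k + 1) n)" .
  moreover have "r = of_bool (odd b)"
    by (simp add: r_def mod_2_eq_odd)
  ultimately show ?thesis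
    by (simp add: n)
qed

end
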